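(* Let $d\in\mathbb{N}$, $N=d$, $\mathcal{N}=\{1,\dots,d\}$, and consider the switched system $x(t+1)=A_{\nu(t)}x(t)+b_{\nu(t)}\mu(t)$ with state set $\mathcal{X}=\mathbb{R}^d$ and set of admissible continuous controls $\mathcal{U}=\mathbb{R}$. Suppose each $A_i$, $i\in\mathcal{N}$, is an anti-diagonal matrix with all anti-diagonal entries nonzero, and each $b_i\in\mathbb{R}^d$ has its $(d-i+1)$-th entry nonzero and all other entries zero. Define $\mathcal{X}_0=\{0_d\}$, $\mathcal{X}_j=\{x\in\mathbb{R}^d: x_j\neq0,\ x_i=0 \text{ for all } i\neq j\}$ for $j=1,\dots,d$, and $\mathcal{X}_{d+1}=\mathbb{R}^d\setminus\bigcup_{j=0}^d\mathcal{X}_j$. Then $(\mathcal{X}_j)_{j=0}^{d+1}$ is a state-space abstraction of this switched system.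
   Context: A family $(\mathcal{X}_j)_{j=0}^n$ of subsets of $\mathcal{X}$ is a state-space abstraction of the switched system with subsystems $(A_i,b_i)$, $i\in\mathcal{N}$, and admissible continuous control set $\mathcal{U}$ if: (i) $\mathcal{X}_0=\{0_d\}$; (ii) the $\mathcal{X}_j$ are pairwise disjoint; (iii) $\bigcup_{j=0}^n\mathcal{X}_j=\mathcal{X}$; (iv) for each $j\in\{1,\dots,n\}$ and $i\in\mathcal{N}$ there is $k\in\{0,\dots,n\}$ with $A_ix\in\mathcal{X}_k$ for all $x\in\mathcal{X}_j$; (v) for each $j\in\{1,\dots,n\}$ and $i\in\mathcal{N}$ there is $\ell\in\{0,\dots,n\}$ such that for every $x\in\mathcal{X}_j$, $A_ix+b_i\mu(x)\in\mathcal{X}_\ell$ for some $\mu(x)\in\mathcal{U}\setminus\{0\}$. *)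

theory Defs
  imports Complex_Main
begin

text \<open>Convention: a vector in R^d is represented as a function nat => real that
  is zero outside the index range 1..d; a d x d matrix as nat => nat => real,
  only entries with indices in 1..d being relevant.\<close>

definition Rd :: "nat \<Rightarrow> (nat \<Rightarrow> real) set" where
  "Rd d = {x. \<forall>r. r \<notin> {1..d} \<longrightarrow> x r = 0}"

definition zerov :: "nat \<Rightarrow> real" where
  "zerov = (\<lambda>_. 0)"

definition mulv :: "nat \<Rightarrow> (nat \<Rightarrow> nat \<Rightarrow> real) \<Rightarrow> (nat \<Rightarrow> real) \<Rightarrow> (nat \<Rightarrow> real)" where
  "mulv d M x = (\<lambda>r. if r \<in> {1..d} then (\<Sum>c=1..d. M r c * x c) else 0)"

definition state_space_abstraction ::
  "nat \<Rightarrow> (nat \<Rightarrow> real) set \<Rightarrow> nat set \<Rightarrow> (nat \<Rightarrow> nat \<Rightarrow> nat \<Rightarrow> real)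
   \<Rightarrow> (nat \<Rightarrow> nat \<Rightarrow> real) \<Rightarrow> real set \<Rightarrow> (nat \<Rightarrow> (nat \<Rightarrow> real) set) \<Rightarrow> nat \<Rightarrow> bool" where
  "state_space_abstraction d X NN A b U Xs n \<longleftrightarrow>
     Xs 0 = {zerov} \<and>
     (\<forall>j\<le>n. \<forall>k\<le>n. j \<noteq> k \<longrightarrow> Xs j \<inter> Xs k = {}) \<and>
     (\<Union>j\<le>n. Xs j) = X \<and>
     (\<forall>j\<in>{1..n}. \<forall>i\<in>NN. \<exists>k\<le>n. \<forall>x\<in>Xs j. mulv d (A i) x \<in> Xs k) \<and>
     (\<forall>j\<in>{1..n}. \<forall>i\<in>NN. \<exists>l\<le>n. \<forall>x\<in>Xs j. \<exists>u\<in>U - {0}.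
         (\<lambda>r. mulv d (A i) x r + b i r * u) \<in> Xs l)"

definition antidiag_nonzero :: "nat \<Rightarrow> (nat \<Rightarrow> nat \<Rightarrow> real) \<Rightarrow> bool" where
  "antidiag_nonzero d M \<longleftrightarrow>
     (\<forall>r\<in>{1..d}. \<forall>c\<in>{1..d}. (r + c = d + 1 \<longleftrightarrow> M r c \<noteq> 0))"

definition abstr_family :: "nat \<Rightarrow> nat \<Rightarrow> (nat \<Rightarrow> real) set" where
  "abstr_family d j =
     (if j = 0 then {zerov}
      else if j \<le> d then {x \<in> Rd d. x j \<noteq> 0 \<and> (\<forall>i\<in>{1..d}. i \<noteq> j \<longrightarrow> x i = 0)}
      else Rd d - (\<Union>k\<le>d. (if k = 0 then {zerov}
            else {x \<in> Rd d. x k \<noteq> 0 \<and> (\<forall>i\<in>{1..d}. i \<noteq> k \<longrightarrow> x i = 0)})))"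

end

(* A vector is classified by its support: empty, a single coordinate j, or at least two
   coordinates; these are the cells X_0, X_j and X_(d+1).  An anti-diagonal matrix with nonzero
   anti-diagonal maps the support of x bijectively onto its mirror image under r |-> d + 1 - r,
   so the cell of A_i x depends only on the cell of x.  The input vector b_i is supported on the
   single coordinate k = d + 1 - i, and a nonzero control can always be chosen so that it adds k
   to the support of A_i x without cancelling that coordinate; again the resulting cell depends
   only on the cell of x. *)
theory Submission
  imports Defs
begin

lemma state_space_abstraction_of_classifier:
  fixes c :: "(nat \<Rightarrow> real) \<Rightarrow> nat"
  assumes cells: "\<And>j. j \<le> n \<Longrightarrow> Xs j = {x \<in> X. c x = j}"
    and zero: "Xs 0 = {zerov}"
    and bounded: "\<And>x. x \<in> X \<Longrightarrow> c x \<le> n"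
    and free: "\<And>i x. i \<in> NN \<Longrightarrow> x \<in> X \<Longrightarrow>
      mulv d (A i) x \<in> X \<and> c (mulv d (A i) x) = g i (c x)"
    and controlled: "\<And>i x. i \<in> NN \<Longrightarrow> x \<in> X \<Longrightarrow> \<exists>u\<in>U - {0}.
      (\<lambda>r. mulv d (A i) x r + b i r * u) \<in> X \<and> c (\<lambda>r. mulv d (A i) x r + b i r * u) = h i (c x)"
  shows "state_space_abstraction d X NN A b U Xs n"
proof -
  have target: "\<exists>k\<le>n. \<forall>x\<in>Xs j. F x \<in> Xs k"
    if "j \<le> n" and F: "\<And>x. x \<in> X \<Longrightarrow> F x \<in> X \<and> c (F x) = f (c x)" for j F f
  proof (cases "Xs j = {}")
    case False
    then obtain x\<^sub>0 where "x\<^sub>0 \<in> X" "c x\<^sub>0 = j"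
      using cells[OF \<open>j \<le> n\<close>] by blast
    then have "f j \<le> n"
      using F bounded by metis
    moreover have "F x \<in> Xs (f j)" if "x \<in> Xs j" for x
      using that F cells \<open>j \<le> n\<close> \<open>f j \<le> n\<close> by simp
    ultimately show ?thesis
      by blast
  qed auto
  have "\<exists>k\<le>n. \<forall>x\<in>Xs j. mulv d (A i) x \<in> Xs k" if "j \<le> n" "i \<in> NN" for i j
    using target[of j "mulv d (A i)" "g i"] \<open>j \<le> n\<close> free[OF \<open>i \<in> NN\<close>] by blast
  moreover have "\<exists>l\<le>n. \<forall>x\<in>Xs j. \<exists>u\<in>U - {0}. (\<lambda>r. mulv d (A i) x r + b i r * u) \<in> Xs l"
    if "j \<le> n" "i \<in> NN" for i j
  proof -
    have "\<forall>x\<in>X. \<exists>u. u \<in> U - {0} \<and> (\<lambda>r. mulv d (A i) x r + b i r * u) \<in> X \<and>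
        c (\<lambda>r. mulv d (A i) x r + b i r * u) = h i (c x)"
      using controlled[OF \<open>i \<in> NN\<close>] by blast
    then obtain \<mu> where \<mu>: "\<forall>x\<in>X. \<mu> x \<in> U - {0} \<and>
        (\<lambda>r. mulv d (A i) x r + b i r * \<mu> x) \<in> X \<and>
        c (\<lambda>r. mulv d (A i) x r + b i r * \<mu> x) = h i (c x)"
      by (rule bchoice[elim_format]) blast
    obtain l where "l \<le> n" "\<forall>x\<in>Xs j. (\<lambda>r. mulv d (A i) x r + b i r * \<mu> x) \<in> Xs l"
      using target[of j "\<lambda>x r. mulv d (A i) x r + b i r * \<mu> x" "h i"] \<open>j \<le> n\<close> \<mu> by blast
    moreover have "Xs j \<subseteq> X"
      using cells[OF \<open>j \<le> n\<close>] by blast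
    ultimately show ?thesis
      using \<mu> by blast
  qed
  moreover have "Xs j \<inter> Xs k = {}" if "j \<le> n" "k \<le> n" "j \<noteq> k" for j k
    using that cells by auto
  moreover have "(\<Union>j\<le>n. Xs j) = X"
  proof (intro equalityI subsetI)
    fix x assume "x \<in> X"
    then show "x \<in> (\<Union>j\<le>n. Xs j)"
      using cells bounded by blast
  qed (use cells in auto)
  ultimately show ?thesis
    unfolding state_space_abstraction_def using zero by (meson atLeastAtMost_iff)
qed

definition supp_vec :: "nat \<Rightarrow> (nat \<Rightarrow> real) \<Rightarrow> nat set" where
  "supp_vec d x = {r \<in> {1..d}. x r \<noteq> 0}"

definition support_class :: "nat \<Rightarrow> nat set \<Rightarrow> nat" where
  "support_class d S = (if S = {} then 0 else if is_singleton S then the_elem S else d + 1)"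

lemma support_class_cases:
  obtains "S = {}" "support_class d S = 0"
  | a where "S = {a}" "support_class d S = a"
  | "\<not> is_singleton S" "S \<noteq> {}" "support_class d S = d + 1"
  unfolding support_class_def by (metis is_singleton_def the_elem_eq)

lemma support_class_le:
  "S \<subseteq> {1..d} \<Longrightarrow> support_class d S \<le> d + 1"
  by (cases rule: support_class_cases[where S = S and d = d]) auto

lemma support_class_eq_iff:
  assumes "S \<subseteq> {1..d}" "j \<le> d"
  shows "support_class d S = j \<longleftrightarrow> (if j = 0 then S = {} else S = {j})"
  using assms by (cases rule: support_class_cases[where S = S and d = d]) auto

lemma support_class_image:
  assumes "S \<subseteq> {1..d}" "inj_on f S"
  shows "support_class d (f ` S) =
    (if support_class d S \<in> {1..d} then f (support_class d S) else support_class d S)"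
proof (cases rule: support_class_cases[where S = S and d = d])
  case 3
  then have "\<not> is_singleton (f ` S)" "f ` S \<noteq> {}"
    using assms(2) by (simp_all add: is_singleton_altdef card_image)
  then show ?thesis
    using 3 by (simp add: support_class_def)
qed (use assms(1) in \<open>simp_all add: support_class_def\<close>)

lemma support_class_insert:
  assumes "S \<subseteq> {1..d}" "k \<in> {1..d}"
  shows "support_class d (insert k S) = (if support_class d S \<in> {0, k} then k else d + 1)"
proof (cases rule: support_class_cases[where S = S and d = d])
  case (2 a)
  then have "a \<noteq> 0"
    using assms(1) by auto
  moreover have "\<not> is_singleton {k, a}" if "a \<noteq> k"
    using that by (simp add: is_singleton_altdef)
  ultimately show ?thesis
    using 2 by (auto simp: support_class_def)
next
  case 3
  have "\<not> is_singleton (insert k S)"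
  proof
    assume "is_singleton (insert k S)"
    then have "insert k S = {k}"
      by (metis insertI1 is_singleton_the_elem singletonD)
    then show False
      using 3 by (metis is_singletonI' singletonD subset_insertI subset_singletonD)
  qed
  then show ?thesis
    using 3 assms(2) by (simp add: support_class_def)
qed (simp add: support_class_def)

lemma supp_vec_subset: "supp_vec d x \<subseteq> {1..d}"
  by (auto simp: supp_vec_def)

lemma supp_vec_eq_empty_iff:
  "x \<in> Rd d \<Longrightarrow> supp_vec d x = {} \<longleftrightarrow> x = zerov"
  by (auto simp: supp_vec_def Rd_def zerov_def fun_eq_iff)

lemma abstr_family_eq:
  assumes "j \<le> d + 1"
  shows "abstr_family d j = {x \<in> Rd d. support_class d (supp_vec d x) = j}"
proof -
  have class_iff: "support_class d (supp_vec d x) = k \<longleftrightarrow>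
      (if k = 0 then supp_vec d x = {} else supp_vec d x = {k})" if "k \<le> d" for k x
    using support_class_eq_iff[OF supp_vec_subset that] .
  have low: "abstr_family d k = {x \<in> Rd d. support_class d (supp_vec d x) = k}" if "k \<le> d" for k
  proof (cases "k = 0")
    case True
    have "zerov \<in> Rd d"
      by (simp add: Rd_def zerov_def)
    then have "{x \<in> Rd d. supp_vec d x = {}} = {zerov}"
      using supp_vec_eq_empty_iff by blast
    then show ?thesis
      using True class_iff[OF that] by (simp add: abstr_family_def)
  next
    case False
    have "abstr_family d k = {x \<in> Rd d. x k \<noteq> 0 \<and> (\<forall>i\<in>{1..d}. i \<noteq> k \<longrightarrow> x i = 0)}"
      using that False by (simp add: abstr_family_def)
    also have "\<dots> = {x \<in> Rd d. supp_vec d x = {k}}"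
    proof (intro Collect_cong conj_cong refl)
      fix x
      have "k \<in> {1..d}"
        using that False by simp
      then show "x k \<noteq> 0 \<and> (\<forall>i\<in>{1..d}. i \<noteq> k \<longrightarrow> x i = 0) \<longleftrightarrow> supp_vec d x = {k}"
        unfolding supp_vec_def set_eq_iff mem_Collect_eq by blast
    qed
    finally show ?thesis
      using class_iff[OF that] False by simp
  qed
  have "abstr_family d (d + 1) = Rd d - (\<Union>k\<le>d. if k = 0 then {zerov}
      else {x \<in> Rd d. x k \<noteq> 0 \<and> (\<forall>i\<in>{1..d}. i \<noteq> k \<longrightarrow> x i = 0)})"
    by (simp add: abstr_family_def)
  also have "\<dots> = Rd d - (\<Union>k\<le>d. abstr_family d k)"
    by (rule arg_cong[where f = "(-) (Rd d)"], rule SUP_cong) (simp_all add: abstr_family_def)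
  also have "\<dots> = {x \<in> Rd d. support_class d (supp_vec d x) = d + 1}"
  proof -
    have "support_class d (supp_vec d x) \<le> d \<or> support_class d (supp_vec d x) = d + 1" for x
      using support_class_le[OF supp_vec_subset, of d x] by linarith
    then show ?thesis
      using low by auto
  qed
  finally have high: "abstr_family d (d + 1) = {x \<in> Rd d. support_class d (supp_vec d x) = d + 1}" .
  show ?thesis
  proof (cases "j \<le> d")
    case False
    then show ?thesis
      using assms high by (simp add: le_Suc_eq)
  qed (rule low)
qed

lemma antidiag_nonzero_eq_0_iff:
  assumes "antidiag_nonzero d M" "r \<in> {1..d}" "c \<in> {1..d}"
  shows "M r c = 0 \<longleftrightarrow> c \<noteq> d + 1 - r"
proof -
  have "r + c = d + 1 \<longleftrightarrow> c = d + 1 - r"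
    using assms(2) by auto
  then show ?thesis
    using assms unfolding antidiag_nonzero_def by blast
qed

lemma mulv_antidiag:
  assumes "antidiag_nonzero d M" "r \<in> {1..d}"
  shows "mulv d M x r = M r (d + 1 - r) * x (d + 1 - r)"
proof -
  have "(\<Sum>c=1..d. M r c * x c) = (\<Sum>c=1..d. if c = d + 1 - r then M r c * x c else 0)"
    using antidiag_nonzero_eq_0_iff[OF assms] by (intro sum.cong) auto
  also have "\<dots> = M r (d + 1 - r) * x (d + 1 - r)"
    using assms(2) by (subst sum.delta) auto
  finally show ?thesis
    using assms(2) by (simp add: mulv_def)
qed

lemma supp_vec_mulv_antidiag:
  assumes "antidiag_nonzero d M"
  shows "supp_vec d (mulv d M x) = (\<lambda>r. d + 1 - r) ` supp_vec d x"
proof -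
  have "r \<in> supp_vec d (mulv d M x) \<longleftrightarrow> r \<in> {1..d} \<and> x (d + 1 - r) \<noteq> 0" for r
  proof (cases "r \<in> {1..d}")
    case True
    then have "d + 1 - r \<in> {1..d}"
      by auto
    then have "M r (d + 1 - r) \<noteq> 0"
      using antidiag_nonzero_eq_0_iff[OF assms True] by blast
    then show ?thesis
      using mulv_antidiag[OF assms True] by (simp add: supp_vec_def)
  qed (auto simp: supp_vec_def)
  moreover have "(\<lambda>r. d + 1 - r) ` supp_vec d x = {r \<in> {1..d}. x (d + 1 - r) \<noteq> 0}"
  proof (intro equalityI subsetI)
    fix r assume "r \<in> (\<lambda>r. d + 1 - r) ` supp_vec d x"
    then show "r \<in> {r \<in> {1..d}. x (d + 1 - r) \<noteq> 0}"
      by (auto simp: supp_vec_def)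
  next
    fix r assume r: "r \<in> {r \<in> {1..d}. x (d + 1 - r) \<noteq> 0}"
    then have "d + 1 - r \<in> supp_vec d x" "r = d + 1 - (d + 1 - r)"
      by (auto simp: supp_vec_def)
    then show "r \<in> (\<lambda>r. d + 1 - r) ` supp_vec d x"
      by (metis image_eqI)
  qed
  ultimately show ?thesis
    by blast
qed

lemma mulv_in_Rd: "mulv d M x \<in> Rd d"
  by (simp add: mulv_def Rd_def)

lemma support_class_mulv_antidiag:
  assumes "antidiag_nonzero d M"
  shows "support_class d (supp_vec d (mulv d M x)) =
    (let j = support_class d (supp_vec d x) in if j \<in> {1..d} then d + 1 - j else j)"
proof -
  have "inj_on (\<lambda>r. d + 1 - r) (supp_vec d x)"
    by (rule inj_onI) (auto simp: supp_vec_def)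
  then show ?thesis
    by (simp add: supp_vec_mulv_antidiag[OF assms] support_class_image[OF supp_vec_subset] Let_def)
qed

text \<open>The control doubles the k-th coordinate if it is nonzero and creates it otherwise,
  so it never cancels.\<close>
lemma exists_control_supp_vec_insert:
  assumes "y \<in> Rd d" "k \<in> {1..d}" "\<beta> k \<noteq> 0" "\<forall>r. r \<noteq> k \<longrightarrow> \<beta> r = 0"
  obtains u where "u \<noteq> 0" "(\<lambda>r. y r + \<beta> r * u) \<in> Rd d"
    "supp_vec d (\<lambda>r. y r + \<beta> r * u) = insert k (supp_vec d y)"
proof
  define u where "u = (if y k \<noteq> 0 then y k / \<beta> k else 1)"
  show "u \<noteq> 0"
    using assms(3) by (simp add: u_def)
  show "(\<lambda>r. y r + \<beta> r * u) \<in> Rd d"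
    using assms by (auto simp: Rd_def)
  have "y k + \<beta> k * u \<noteq> 0"
    using assms(3) by (simp add: u_def)
  then show "supp_vec d (\<lambda>r. y r + \<beta> r * u) = insert k (supp_vec d y)"
    using assms(2,4) by (auto simp: supp_vec_def)
qed

theorem proposition2:
  fixes d :: nat
    and A :: "nat \<Rightarrow> nat \<Rightarrow> nat \<Rightarrow> real"
    and b :: "nat \<Rightarrow> nat \<Rightarrow> real"
  assumes hA: "\<forall>i\<in>{1..d}. antidiag_nonzero d (A i)"
    and hb: "\<forall>i\<in>{1..d}. b i (d - i + 1) \<noteq> 0 \<and> (\<forall>r. r \<noteq> d - i + 1 \<longrightarrow> b i r = 0)"
  shows "state_space_abstraction d (Rd d) {1..d} A b UNIV (abstr_family d) (d + 1)"
proof -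
  let ?c = "\<lambda>x. support_class d (supp_vec d x)"
  let ?g = "\<lambda>i j. if j \<in> {1..d} then d + 1 - j else j"
  let ?h = "\<lambda>i j. if ?g i j \<in> {0, d - i + 1} then d - i + 1 else d + 1"
  have free: "mulv d (A i) x \<in> Rd d \<and> ?c (mulv d (A i) x) = ?g i (?c x)"
    if "i \<in> {1..d}" for i x
    using support_class_mulv_antidiag[of d "A i" x] hA that by (simp add: mulv_in_Rd Let_def)
  have controlled: "\<exists>u\<in>UNIV - {0}. (\<lambda>r. mulv d (A i) x r + b i r * u) \<in> Rd d \<and>
      ?c (\<lambda>r. mulv d (A i) x r + b i r * u) = ?h i (?c x)"
    if i: "i \<in> {1..d}" for i x
  proof -
    have k: "d - i + 1 \<in> {1..d}"
      using i by auto
    obtain u where "u \<noteq> 0" "(\<lambda>r. mulv d (A i) x r + b i r * u) \<in> Rd d"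
      "supp_vec d (\<lambda>r. mulv d (A i) x r + b i r * u) =
        insert (d - i + 1) (supp_vec d (mulv d (A i) x))"
      using exists_control_supp_vec_insert[OF mulv_in_Rd k] hb i by blast
    then show ?thesis
      using support_class_insert[OF supp_vec_subset k] free[OF i, of x] by auto
  qed
  have zero: "abstr_family d 0 = {zerov}"
    by (simp add: abstr_family_def)
  show ?thesis
    by (rule state_space_abstraction_of_classifier[where c = ?c and g = ?g and h = ?h,
          OF abstr_family_eq zero support_class_le[OF supp_vec_subset] free controlled])
qed

end
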